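(* Let $N>0$, $m>0$, $F>0$, $\alpha>0$, $w>0$ be fixed with $Nm>\alpha$, and for $g\geq 0$, $\tau\in(0,1)$, $L_g\geq 0$ define \[ L=\frac{N\left[(1-\tau)(mL_g+\alpha F)+(mg+F)mN\right]}{\alpha+(Nm-\alpha)\tau},\qquad q=\frac{(1-\tau)(L+L_g-\alpha g)}{\left(Nm+\alpha(1-\tau)\right)(L+L_g)}, \] \[ p=\frac{L+L_g}{L+L_g-\alpha g}\left(mw+\frac{\alpha(1-\tau)w}{N}\right),\qquad \Pi=\left((L+L_g)q+g\right)(p-mw)-Fw, \] regarded as functions of $(g,\tau,L_g)$, and let \[ \Lambda=(1-Nmq)\left(\frac{Nm}{1-\tau}+2\alpha\right)g-N(mg+F). \] Then at any point $(g,\tau,L_g)$: $\frac{\partial \Pi}{\partial L_g}<0$ if $L_g<\Lambda$; $\frac{\partial \Pi}{\partial L_g}=0$ if $L_g=\Lambda$; and $\frac{\partial \Pi}{\partial L_g}>0$ if $L_g>\Lambda$.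
   Context: These are the symmetric-equilibrium private employment $L$, per-capita consumption $q$ of each variety, price $p$, and profit $\Pi$ of each firm in a monopolistic-competition general equilibrium model with a measure $N$ of firms, marginal and fixed labor inputs $m$ and $F$, CARA utility parameter $\alpha$, nominal wage $w$, income tax rate $\tau$, government purchase $g$ of each variety, and government employment $L_g$. Here $\Lambda$ is evaluated at the same point (with $q$ the equilibrium value there). Partial derivatives are taken in $(g,\tau,L_g)$ with other parameters fixed. *)

theory Defs
  imports Complex_Main
begin

definition empL :: "real \<Rightarrow> real \<Rightarrow> real \<Rightarrow> real \<Rightarrow> real \<Rightarrow> real \<Rightarrow> real \<Rightarrow> real" where
  "empL N m F \<alpha> g \<tau> Lg =
     N * ((1 - \<tau>) * (m * Lg + \<alpha> * F) + (m * g + F) * m * N) / (\<alpha> + (N * m - \<alpha>) * \<tau>)"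

definition qty :: "real \<Rightarrow> real \<Rightarrow> real \<Rightarrow> real \<Rightarrow> real \<Rightarrow> real \<Rightarrow> real \<Rightarrow> real" where
  "qty N m F \<alpha> g \<tau> Lg =
     (let L = empL N m F \<alpha> g \<tau> Lg in
      (1 - \<tau>) * (L + Lg - \<alpha> * g) / ((N * m + \<alpha> * (1 - \<tau>)) * (L + Lg)))"

definition price :: "real \<Rightarrow> real \<Rightarrow> real \<Rightarrow> real \<Rightarrow> real \<Rightarrow> real \<Rightarrow> real \<Rightarrow> real \<Rightarrow> real" where
  "price N m F \<alpha> w g \<tau> Lg =
     (let L = empL N m F \<alpha> g \<tau> Lg in
      (L + Lg) / (L + Lg - \<alpha> * g) * (m * w + \<alpha> * (1 - \<tau>) * w / N))"

definition profit :: "real \<Rightarrow> real \<Rightarrow> real \<Rightarrow> real \<Rightarrow> real \<Rightarrow> real \<Rightarrow> real \<Rightarrow> real \<Rightarrow> real" where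
  "profit N m F \<alpha> w g \<tau> Lg =
     (let L = empL N m F \<alpha> g \<tau> Lg in
      ((L + Lg) * qty N m F \<alpha> g \<tau> Lg + g) * (price N m F \<alpha> w g \<tau> Lg - m * w) - F * w)"

definition Lambda :: "real \<Rightarrow> real \<Rightarrow> real \<Rightarrow> real \<Rightarrow> real \<Rightarrow> real \<Rightarrow> real \<Rightarrow> real" where
  "Lambda N m F \<alpha> g \<tau> Lg =
     (1 - N * m * qty N m F \<alpha> g \<tau> Lg) * (N * m / (1 - \<tau>) + 2 * \<alpha>) * g - N * (m * g + F)"

end

theory Submission
  imports Defs
begin

text \<open>Write \<open>S = L + L\<^sub>g\<close> for total employment. It is affine in \<open>L\<^sub>g\<close> with positive
  slope \<open>K / (\<alpha> + (N m - \<alpha>) \<tau>)\<close>, where \<open>K = N m + \<alpha> (1 - \<tau>)\<close>, and in terms of \<open>S\<close> the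
  profit collapses to \<open>w \<alpha> / (N K) \<cdot> ((1 - \<tau>) S + N m g)\<^sup>2 / (S - \<alpha> g) - F w\<close>. Its
  derivative in \<open>S\<close> has the sign of \<open>(1 - \<tau>) S - (N m + 2 \<alpha> (1 - \<tau>)) g\<close>. On the other
  hand \<open>1 - N m q = (L\<^sub>g + N (m g + F)) / S\<close>, which makes \<open>L\<^sub>g - \<Lambda>\<close> a positive multiple
  of the same factor.\<close>

lemma has_real_derivative_power2_divide_shift:
  fixes a b d s :: real
  assumes "s \<noteq> d"
  shows "((\<lambda>s. (a * s + b)\<^sup>2 / (s - d)) has_real_derivative
           (a * s + b) * (a * s - 2 * a * d - b) / (s - d)\<^sup>2) (at s)"
proof -
  have "((\<lambda>s. (a * s + b)\<^sup>2 / (s - d)) has_real_derivative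
          (2 * (a * s + b) * a * (s - d) - (a * s + b)\<^sup>2) / (s - d)\<^sup>2) (at s)"
    using assms by (auto intro!: derivative_eq_intros simp: power2_eq_square)
  then show ?thesis
    by (simp add: power2_eq_square algebra_simps)
qed

lemma convex_combination_strictly_between:
  fixes a b t :: "'a::linordered_field"
  assumes "a < b" "0 < t" "t < 1"
  shows "a < a + (b - a) * t" "a + (b - a) * t < b"
proof -
  have "0 < (b - a) * t" "(b - a) * t < b - a"
    using assms by (simp_all add: mult_less_cancel_left_pos)
  then show "a < a + (b - a) * t" "a + (b - a) * t < b"
    by simp_all
qed

definition total_employment :: "real \<Rightarrow> real \<Rightarrow> real \<Rightarrow> real \<Rightarrow> real \<Rightarrow> real \<Rightarrow> real \<Rightarrow> real" where
  "total_employment N m F \<alpha> g \<tau> Lg = empL N m F \<alpha> g \<tau> Lg + Lg"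

lemma total_employment_affine:
  assumes "\<alpha> + (N * m - \<alpha>) * \<tau> \<noteq> 0"
  shows "total_employment N m F \<alpha> g \<tau> x =
    ((N * m + \<alpha> * (1 - \<tau>)) * x + N * (1 - \<tau>) * \<alpha> * F + N * m * (N * (m * g + F)))
      / (\<alpha> + (N * m - \<alpha>) * \<tau>)"
  using assms unfolding total_employment_def empL_def by (simp add: field_simps)

lemma has_real_derivative_total_employment:
  assumes "\<alpha> + (N * m - \<alpha>) * \<tau> \<noteq> 0"
  shows "(total_employment N m F \<alpha> g \<tau> has_real_derivative
           (N * m + \<alpha> * (1 - \<tau>)) / (\<alpha> + (N * m - \<alpha>) * \<tau>)) (at x)"
  unfolding total_employment_affine[OF assms, abs_def]
  using assms by (auto intro!: derivative_eq_intros)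

lemma profit_eq_total_employment:
  fixes N m F \<alpha> w g \<tau> Lg :: real
  defines "S \<equiv> total_employment N m F \<alpha> g \<tau> Lg"
  assumes "N \<noteq> 0" "N * m + \<alpha> * (1 - \<tau>) \<noteq> 0" "S \<noteq> 0" "S \<noteq> \<alpha> * g"
  shows "profit N m F \<alpha> w g \<tau> Lg =
    w * \<alpha> / (N * (N * m + \<alpha> * (1 - \<tau>))) * ((1 - \<tau>) * S + N * m * g)\<^sup>2 / (S - \<alpha> * g) - F * w"
proof -
  define K where "K = N * m + \<alpha> * (1 - \<tau>)"
  have "qty N m F \<alpha> g \<tau> Lg = (1 - \<tau>) * (S - \<alpha> * g) / (K * S)"
    unfolding qty_def Let_def S_def total_employment_def K_def by simp
  then have "S * qty N m F \<alpha> g \<tau> Lg = (1 - \<tau>) * (S - \<alpha> * g) / K"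
    using assms(4) by simp
  then have sales: "S * qty N m F \<alpha> g \<tau> Lg + g = ((1 - \<tau>) * S + N * m * g) / K"
    using assms(3) unfolding K_def by (simp add: field_simps)
  have "price N m F \<alpha> w g \<tau> Lg = S / (S - \<alpha> * g) * (m * w + \<alpha> * (1 - \<tau>) * w / N)"
    unfolding price_def Let_def S_def total_employment_def by simp
  then have markup: "price N m F \<alpha> w g \<tau> Lg - m * w
      = w * \<alpha> * ((1 - \<tau>) * S + N * m * g) / (N * (S - \<alpha> * g))"
    using assms(2-5) by (simp add: field_simps)
  show ?thesis
    unfolding profit_def Let_def total_employment_def[symmetric] S_def[symmetric] sales markup
    using assms(2-5) unfolding K_def by (simp add: field_simps power2_eq_square)
qed

lemma one_minus_qty:
  fixes N m F \<alpha> g \<tau> Lg :: real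
  defines "S \<equiv> total_employment N m F \<alpha> g \<tau> Lg"
  assumes "\<alpha> + (N * m - \<alpha>) * \<tau> \<noteq> 0" "N * m + \<alpha> * (1 - \<tau>) \<noteq> 0" "S \<noteq> 0"
  shows "1 - N * m * qty N m F \<alpha> g \<tau> Lg = (Lg + N * (m * g + F)) / S"
proof -
  define K where "K = N * m + \<alpha> * (1 - \<tau>)"
  have S_den: "S * (\<alpha> + (N * m - \<alpha>) * \<tau>) = K * Lg + N * (1 - \<tau>) * \<alpha> * F + N * m * (N * (m * g + F))"
    unfolding S_def total_employment_affine[OF assms(2)] K_def using assms(2) by simp
  have qty_eq: "qty N m F \<alpha> g \<tau> Lg = (1 - \<tau>) * (S - \<alpha> * g) / (K * S)"
    unfolding qty_def Let_def S_def total_employment_def K_def by simp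
  have "K \<noteq> 0"
    using assms(3) unfolding K_def .
  then have "1 - N * m * qty N m F \<alpha> g \<tau> Lg = (K * S - N * m * (1 - \<tau>) * (S - \<alpha> * g)) / (K * S)"
    unfolding qty_eq using assms(4) by (simp add: field_simps)
  also have "K * S - N * m * (1 - \<tau>) * (S - \<alpha> * g) = K * (Lg + N * (m * g + F))"
    using S_den unfolding K_def by (simp add: algebra_simps)
  finally show ?thesis
    using assms(3,4) unfolding K_def by simp
qed

lemma Lg_minus_Lambda:
  fixes N m F \<alpha> g \<tau> Lg :: real
  defines "S \<equiv> total_employment N m F \<alpha> g \<tau> Lg"
  assumes "\<alpha> + (N * m - \<alpha>) * \<tau> \<noteq> 0" "N * m + \<alpha> * (1 - \<tau>) \<noteq> 0" "S \<noteq> 0" "\<tau> \<noteq> 1"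
  shows "Lg - Lambda N m F \<alpha> g \<tau> Lg =
    (Lg + N * (m * g + F)) * ((1 - \<tau>) * S - (N * m + 2 * \<alpha> * (1 - \<tau>)) * g) / ((1 - \<tau>) * S)"
  unfolding Lambda_def one_minus_qty[OF assms(2,3) assms(4)[unfolded S_def]] S_def[symmetric]
  using assms(4,5) by (simp add: field_simps)

lemma has_real_derivative_profit:
  fixes N m F \<alpha> w g \<tau> Lg :: real
  defines "S \<equiv> total_employment N m F \<alpha> g \<tau> Lg"
  assumes N: "N \<noteq> 0" and K: "N * m + \<alpha> * (1 - \<tau>) \<noteq> 0" and den: "\<alpha> + (N * m - \<alpha>) * \<tau> \<noteq> 0"
    and nonneg: "0 \<le> \<alpha> * g" and S: "\<alpha> * g < S"
  shows "(profit N m F \<alpha> w g \<tau> has_real_derivative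
    w * \<alpha> / (N * (\<alpha> + (N * m - \<alpha>) * \<tau>)) * ((1 - \<tau>) * S + N * m * g)
      * ((1 - \<tau>) * S - (N * m + 2 * \<alpha> * (1 - \<tau>)) * g) / (S - \<alpha> * g)\<^sup>2) (at Lg)"
proof -
  define T where "T = total_employment N m F \<alpha> g \<tau>"
  define c where "c = w * \<alpha> / (N * (N * m + \<alpha> * (1 - \<tau>)))"
  define h where "h s = ((1 - \<tau>) * s + N * m * g)\<^sup>2 / (s - \<alpha> * g)" for s
  have T': "(T has_real_derivative (N * m + \<alpha> * (1 - \<tau>)) / (\<alpha> + (N * m - \<alpha>) * \<tau>)) (at x)" for x
    unfolding T_def using den by (rule has_real_derivative_total_employment)
  have h': "(h has_real_derivative ((1 - \<tau>) * S + N * m * g)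
      * ((1 - \<tau>) * S - (N * m + 2 * \<alpha> * (1 - \<tau>)) * g) / (S - \<alpha> * g)\<^sup>2) (at (T Lg))"
    using has_real_derivative_power2_divide_shift[of S "\<alpha> * g" "1 - \<tau>" "N * m * g"] S
    unfolding h_def T_def S_def[symmetric] by (simp add: algebra_simps)
  define D where "D = ((1 - \<tau>) * S + N * m * g)
      * ((1 - \<tau>) * S - (N * m + 2 * \<alpha> * (1 - \<tau>)) * g) / (S - \<alpha> * g)\<^sup>2"
  have "((\<lambda>x. c * h (T x) - F * w) has_real_derivative
      c * (D * ((N * m + \<alpha> * (1 - \<tau>)) / (\<alpha> + (N * m - \<alpha>) * \<tau>))) - 0) (at Lg)"
    unfolding D_def by (intro DERIV_diff DERIV_cmult DERIV_chain2[OF h' T'] DERIV_const)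
  moreover have "open {x. \<alpha> * g < T x}"
    using T' by (intro open_Collect_less continuous_intros continuous_at_imp_continuous_on) (blast intro: DERIV_isCont)
  moreover have "Lg \<in> {x. \<alpha> * g < T x}"
    using S unfolding S_def T_def by simp
  moreover have "c * h (T x) - F * w = profit N m F \<alpha> w g \<tau> x" if "x \<in> {x. \<alpha> * g < T x}" for x
    using profit_eq_total_employment[OF N K] that nonneg unfolding c_def h_def T_def by simp
  ultimately have "(profit N m F \<alpha> w g \<tau> has_real_derivative
      c * (D * ((N * m + \<alpha> * (1 - \<tau>)) / (\<alpha> + (N * m - \<alpha>) * \<tau>))) - 0) (at Lg)"
    by (rule has_field_derivative_transform_within_open)
  moreover have "c * (D * ((N * m + \<alpha> * (1 - \<tau>)) / (\<alpha> + (N * m - \<alpha>) * \<tau>))) - 0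
      = w * \<alpha> / (N * (\<alpha> + (N * m - \<alpha>) * \<tau>)) * ((1 - \<tau>) * S + N * m * g)
        * ((1 - \<tau>) * S - (N * m + 2 * \<alpha> * (1 - \<tau>)) * g) / (S - \<alpha> * g)\<^sup>2"
    using K unfolding c_def D_def by (simp add: ac_simps)
  ultimately show ?thesis
    by simp
qed

lemma total_employment_gt:
  fixes N m F \<alpha> g \<tau> Lg :: real
  assumes "0 < N" "0 < m" "0 < F" "0 < \<alpha>" "\<alpha> < N * m"
    and "0 \<le> g" "0 < \<tau>" "\<tau> < 1" "0 \<le> Lg"
  shows "\<alpha> * g < total_employment N m F \<alpha> g \<tau> Lg"
proof -
  define den where "den = \<alpha> + (N * m - \<alpha>) * \<tau>"
  have den: "0 < den" "den < N * m"
    using convex_combination_strictly_between[of \<alpha> "N * m" \<tau>] assms unfolding den_def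
    by (auto intro: less_trans[of 0 \<alpha>])
  have "\<alpha> * g * den \<le> N * m * g * (N * m)"
    using assms den by (intro mult_mono) auto
  also have "\<dots> < N * ((m * g + F) * m * N)"
    using assms by (simp add: algebra_simps)
  also have "\<dots> \<le> N * ((1 - \<tau>) * (m * Lg + \<alpha> * F) + (m * g + F) * m * N)"
    using assms by simp
  finally have "\<alpha> * g < empL N m F \<alpha> g \<tau> Lg"
    using den unfolding empL_def den_def[symmetric] by (simp add: field_simps)
  then show ?thesis
    using assms unfolding total_employment_def by simp
qed

theorem theorem5:
  fixes N m F \<alpha> w g \<tau> Lg :: real
  assumes "N > 0" "m > 0" "F > 0" "\<alpha> > 0" "w > 0" "N * m > \<alpha>"
    and "g \<ge> 0" "0 < \<tau>" "\<tau> < 1" "Lg \<ge> 0"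
  shows "\<exists>D. ((\<lambda>x. profit N m F \<alpha> w g \<tau> x) has_real_derivative D) (at Lg) \<and>
             (Lg < Lambda N m F \<alpha> g \<tau> Lg \<longrightarrow> D < 0) \<and>
             (Lg = Lambda N m F \<alpha> g \<tau> Lg \<longrightarrow> D = 0) \<and>
             (Lg > Lambda N m F \<alpha> g \<tau> Lg \<longrightarrow> D > 0)"
proof -
  define S where "S = total_employment N m F \<alpha> g \<tau> Lg"
  define Z where "Z = (1 - \<tau>) * S - (N * m + 2 * \<alpha> * (1 - \<tau>)) * g"
  define den where "den = \<alpha> + (N * m - \<alpha>) * \<tau>"
  have den: "0 < den"
    using assms unfolding den_def by (simp add: add_pos_pos)
  have K: "0 < N * m + \<alpha> * (1 - \<tau>)"
    using assms by (simp add: add_pos_pos)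
  have S: "\<alpha> * g < S" "0 < S"
    using total_employment_gt[of N m F \<alpha> g \<tau> Lg] assms unfolding S_def
    by (auto intro: le_less_trans[of 0 "\<alpha> * g"])
  have X: "0 < Lg + N * (m * g + F)"
    using assms by (simp add: add_nonneg_pos add_nonneg_nonneg)
  define P where "P = w * \<alpha> / (N * den) * ((1 - \<tau>) * S + N * m * g) / (S - \<alpha> * g)\<^sup>2"
  have deriv: "(profit N m F \<alpha> w g \<tau> has_real_derivative P * Z) (at Lg)"
    using has_real_derivative_profit[of N m \<alpha> \<tau> g F Lg w] assms K den S
    unfolding P_def Z_def S_def den_def by (simp add: ac_simps)
  have "sgn (P * Z) = sgn Z"
    using assms den S unfolding P_def by (simp add: sgn_mult add_pos_nonneg)
  moreover have "sgn (Lg - Lambda N m F \<alpha> g \<tau> Lg) = sgn Z"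
    using Lg_minus_Lambda[of \<alpha> N m \<tau> F g Lg] assms K den S X
    unfolding Z_def S_def den_def by (simp add: sgn_mult add_pos_nonneg)
  ultimately have "sgn (P * Z) = sgn (Lg - Lambda N m F \<alpha> g \<tau> Lg)"
    by simp
  then show ?thesis
    using deriv sgn_less[of "P * Z"] sgn_greater[of "P * Z"] sgn_0_0[of "P * Z"]
    by (intro exI[of _ "P * Z"]) auto
qed

end
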